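(* Let $n\ge2$, and let $\Gamma,\Gamma'\in\mathcal{K}_n$ with associated arrays $A,A'$ and associated directed graphs $G,G'$. Then $\Gamma\simeq\Gamma'$ (as groups) if and only if $A=A'$, which in turn holds if and only if $G$ and $G'$ are isomorphic as directed graphs.
   Context: Let $e_1,\dots,e_n$ be the canonical basis of $\mathbb{R}^n$. For $1\le i\le n-1$ let $C_i$ be the diagonal matrix with $-1$ in position $i$ and $1$ elsewhere, and $c_i=\tfrac12e_{i+1}+\sum_{j=1}^{i-1}c_{ji}e_j$ with $c_{ji}\in\{0,\tfrac12\}$. $\mathcal{K}_n$ is the set of subgroups of $I(\mathbb{R}^n)$ generated by $\{C_iL_{c_i}:1\le i\le n-1\}\cup\{L_{e_j}:1\le j\le n\}$, over all choices of the $c_{ji}$ (here $BL_b$ is $x\mapsto B(x+b)$). The array $A$ of such a group is the $n\times n$ array whose $i$-th column, for $1\le i\le n-1$, is the coordinate vector of $c_i$, and whose $n$-th column is the vector with entries in $\{0,\tfrac12\}$ congruent to $c_1+\dots+c_{n-1}$ modulo $\mathbb{Z}^n$. The associated directed graph has vertex set $\{v_1,\dots,v_n\}$ and an arrow from $v_i$ to $v_j$ (loops allowed) if and only if the $(i,j)$ entry of $A$ equals $\tfrac12$. *)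

theory Defs
  imports "HOL-Analysis.Analysis" "HOL-Algebra.Algebra"
begin

definition Rn :: "nat \<Rightarrow> (nat \<Rightarrow> real) set" where
  "Rn n = {x. \<forall>k. k \<notin> {1..n} \<longrightarrow> x k = 0}"

definition unitv :: "nat \<Rightarrow> nat \<Rightarrow> real" where
  "unitv j = (\<lambda>k. if k = j then 1 else 0)"

definition valid_params :: "nat \<Rightarrow> (nat \<Rightarrow> nat \<Rightarrow> real) \<Rightarrow> bool" where
  "valid_params n c \<longleftrightarrow> (\<forall>i j. 1 \<le> j \<and> j < i \<and> i \<le> n - 1 \<longrightarrow> c j i \<in> {0, 1/2})"

definition cvec :: "(nat \<Rightarrow> nat \<Rightarrow> real) \<Rightarrow> nat \<Rightarrow> nat \<Rightarrow> real" where
  "cvec c i = (\<lambda>k. (1/2) * unitv (i+1) k + (\<Sum>j\<in>{1..<i}. c j i * unitv j k))"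

definition Cmat :: "nat \<Rightarrow> (nat \<Rightarrow> real) \<Rightarrow> (nat \<Rightarrow> real)" where
  "Cmat i x = (\<lambda>k. (if k = i then -1 else 1) * x k)"

definition genC :: "nat \<Rightarrow> (nat \<Rightarrow> nat \<Rightarrow> real) \<Rightarrow> nat \<Rightarrow> ((nat \<Rightarrow> real) \<Rightarrow> (nat \<Rightarrow> real))" where
  "genC n c i = (\<lambda>x \<in> Rn n. Cmat i (\<lambda>k. x k + cvec c i k))"

definition transl :: "nat \<Rightarrow> nat \<Rightarrow> ((nat \<Rightarrow> real) \<Rightarrow> (nat \<Rightarrow> real))" where
  "transl n j = (\<lambda>x \<in> Rn n. (\<lambda>k. x k + unitv j k))"

definition Kgroup :: "nat \<Rightarrow> (nat \<Rightarrow> nat \<Rightarrow> real) \<Rightarrow> ((nat \<Rightarrow> real) \<Rightarrow> (nat \<Rightarrow> real)) monoid" where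
  "Kgroup n c = subgroup_generated (BijGroup (Rn n))
      ({genC n c i | i. 1 \<le> i \<and> i \<le> n - 1} \<union> {transl n j | j. 1 \<le> j \<and> j \<le> n})"

definition arr :: "nat \<Rightarrow> (nat \<Rightarrow> nat \<Rightarrow> real) \<Rightarrow> nat \<Rightarrow> nat \<Rightarrow> real" where
  "arr n c k i =
     (if k \<in> {1..n} \<and> i \<in> {1..n} then
        (if i \<le> n - 1 then cvec c i k
         else (THE y. y \<in> {0, 1/2} \<and> (\<Sum>l\<in>{1..n-1}. cvec c l k) - y \<in> \<int>))
      else 0)"

definition arcs :: "nat \<Rightarrow> (nat \<Rightarrow> nat \<Rightarrow> real) \<Rightarrow> (nat \<times> nat) set" where
  "arcs n c = {(i, j). i \<in> {1..n} \<and> j \<in> {1..n} \<and> arr n c i j = 1/2}"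

definition digraph_iso :: "'a set \<Rightarrow> ('a \<times> 'a) set \<Rightarrow> 'b set \<Rightarrow> ('b \<times> 'b) set \<Rightarrow> bool" where
  "digraph_iso V E V' E' \<longleftrightarrow>
     (\<exists>f. bij_betw f V V' \<and> (\<forall>u\<in>V. \<forall>v\<in>V. (u, v) \<in> E \<longleftrightarrow> (f u, f v) \<in> E'))"

end

theory Submission
  imports Defs
begin

text \<open>
  Every element of \<Gamma> is an affine map x \<mapsto> D_S x + v, where D_S is the diagonal sign matrix
  that is -1 exactly on S \<subseteq> {1..n-1} and v \<equiv> \<Sum>i\<in>S. c_i modulo \<int>^n. Purely in terms of the
  group one can recognise: the translations (the elements commuting with all their conjugates);
  the generators up to translations (D_S x + v inverts exactly the translations supported in S,
  so the non-translations inverting a minimal set of them are those with |S| = 1); and the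
  parity of a coordinate of a translation (whether a translation square can be multiplied in to
  make it commute with a generator, resp. to make it inverted by some element).
  An isomorphism therefore maps the generator with linear part D_{i} to one with linear part
  D_{\<pi> i} for a permutation \<pi> of {1..n-1}, and since the square of that generator is the
  translation by 2 c_i off coordinate i, the k-th coordinate of c_i is 1/2 iff the (\<pi> k)-th
  coordinate of c'_{\<pi> i} is, where \<pi> n = n. A digraph isomorphism yields the same relabelling,
  because v_n is the only vertex with a loop. Finally the entries A(i+1,i) = 1/2 force every such
  relabelling to be the identity.
\<close>

section \<open>The array and its digraph\<close>

lemma cvec_closed_form: "cvec c i k = (if k = i + 1 then 1/2 else if 1 \<le> k \<and> k < i then c k i else 0)"
proof -
  have "(\<Sum>j\<in>{1..<i}. c j i * unitv j k) = (if k \<in> {1..<i} then c k i else 0)"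
    unfolding unitv_def by (simp add: if_distrib cong: if_cong)
  then show ?thesis unfolding cvec_def unitv_def by auto
qed

lemma cvec_eq_0_outside: "i < n \<Longrightarrow> k \<notin> {1..n} \<Longrightarrow> cvec c i k = 0"
  by (auto simp: cvec_closed_form)

lemma cvec_eqI:
  assumes "i \<in> {1..n-1}" "\<forall>k\<in>{1..n}. cvec c i k = cvec c' i k"
  shows "cvec c i = cvec c' i"
proof
  fix k
  show "cvec c i k = cvec c' i k"
    using assms cvec_eq_0_outside[of i n] by (cases "k \<in> {1..n}") auto
qed

lemma cvec_diagonal [simp]: "cvec c i i = 0"
  by (simp add: cvec_closed_form)

lemma cvec_in_halves: "valid_params n c \<Longrightarrow> i \<in> {1..n-1} \<Longrightarrow> cvec c i k \<in> {0, 1/2}"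
  unfolding valid_params_def cvec_closed_form by auto

lemma two_cvec_in_Ints:
  assumes "valid_params n c" "i \<in> {1..n-1}"
  shows "2 * cvec c i k \<in> \<int>"
proof -
  have "cvec c i k = 0 \<or> cvec c i k = 1/2"
    using cvec_in_halves[OF assms] by blast
  then have "2 * cvec c i k = 0 \<or> 2 * cvec c i k = 1"
    by auto
  then show ?thesis
    by (metis Ints_0 Ints_1)
qed

lemma half_notin_Ints: "(1/2 :: real) \<notin> \<int>"
proof
  assume "(1/2 :: real) \<in> \<int>"
  then obtain r where "(1/2 :: real) = of_int r" by (auto elim: Ints_cases)
  then have "1 = 2 * r" by linarith
  then show False by presburger
qed

lemma arr_column: "k \<in> {1..n} \<Longrightarrow> i \<in> {1..n-1} \<Longrightarrow> arr n c k i = cvec c i k"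
  unfolding arr_def by auto

lemma arr_last_diagonal:
  assumes "n \<ge> 2"
  shows "arr n c n n = 1/2"
proof -
  have "(\<Sum>l\<in>{1..n-1}. cvec c l n) = (\<Sum>l\<in>{1..n-1}. if l = n - 1 then 1/2 else 0)"
    using assms by (intro sum.cong) (auto simp: cvec_closed_form)
  also have "\<dots> = 1/2"
    using assms by simp
  finally have last_row: "(\<Sum>l\<in>{1..n-1}. cvec c l n) = 1/2" .
  have "(THE y. y \<in> {0, 1/2} \<and> (\<Sum>l\<in>{1..n-1}. cvec c l n) - y \<in> \<int>) = 1/2"
    unfolding last_row using half_notin_Ints by (intro the_equality) auto
  then show ?thesis
    using assms unfolding arr_def by simp
qed

lemma arr_eq_iff_cvec_eq: "arr n c = arr n c' \<longleftrightarrow> (\<forall>i\<in>{1..n-1}. cvec c i = cvec c' i)"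
proof
  assume arr: "arr n c = arr n c'"
  show "\<forall>i\<in>{1..n-1}. cvec c i = cvec c' i"
  proof (intro ballI cvec_eqI)
    fix i k assume i: "i \<in> {1..n-1}" and k: "k \<in> {1..n}"
    show "cvec c i k = cvec c' i k"
      using arr_column[OF k i, of c] arr_column[OF k i, of c'] arr by simp
  qed
qed (auto simp: arr_def intro!: ext sum.cong)

lemma arcs_loop_iff:
  assumes "n \<ge> 2" "u \<in> {1..n}"
  shows "(u, u) \<in> arcs n c \<longleftrightarrow> u = n"
proof (cases "u = n")
  case True
  then show ?thesis
    using assms arr_last_diagonal[OF assms(1)] by (simp add: arcs_def)
next
  case False
  then have "u \<in> {1..n-1}"
    using assms(2) by auto
  then have "arr n c u u = 0"
    using arr_column[OF assms(2)] by simp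
  then show ?thesis
    using False by (simp add: arcs_def)
qed

lemma arcs_column_iff: "k \<in> {1..n} \<Longrightarrow> i \<in> {1..n-1} \<Longrightarrow> (k, i) \<in> arcs n c \<longleftrightarrow> cvec c i k = 1/2"
  by (auto simp: arcs_def arr_column)

lemma bij_betw_fix_last:
  fixes n :: nat
  assumes "1 \<le> n" "inj_on \<pi> {1..n-1}" "\<pi> ` {1..n-1} \<subseteq> {1..n-1}"
  shows "bij_betw (\<lambda>k. if k = n then n else \<pi> k) {1..n} {1..n}"
proof -
  have "\<pi> ` {1..n-1} = {1..n-1}"
    using assms(2,3) by (intro endo_inj_surj) auto
  then have "bij_betw \<pi> {1..n-1} {1..n-1}"
    using assms(2) by (simp add: bij_betw_def)
  then have "bij_betw (\<lambda>k. if k = n then n else \<pi> k) {1..n-1} {1..n-1}"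
    by (rule bij_betw_cong[THEN iffD2, rotated]) auto
  moreover have "bij_betw (\<lambda>k. if k = n then n else \<pi> k) {n} {n}"
    by simp
  ultimately have "bij_betw (\<lambda>k. if k = n then n else \<pi> k) ({1..n-1} \<union> {n}) ({1..n-1} \<union> {n})"
    by (rule bij_betw_combine) auto
  moreover have "{1..n-1} \<union> {n} = {1..n}"
    using assms(1) by auto
  ultimately show ?thesis
    by simp
qed

text \<open>Downward induction: column i of A has 1/2 in row i+1 and otherwise only in rows above i,
  so once f fixes i+1, ..., n it must fix i as well.\<close>
lemma half_pattern_relabelling_is_id:
  assumes bij: "bij_betw f {1..n} {1..n}" and fn: "f n = n"
    and half: "\<forall>k\<in>{1..n}. \<forall>i\<in>{1..n-1}. cvec c i k = 1/2 \<longrightarrow> cvec c' (f i) (f k) = 1/2"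
  shows "\<forall>k\<in>{1..n}. f k = k"
proof -
  have "\<forall>m. k \<le> m \<and> m \<le> n \<longrightarrow> f m = m" if "1 \<le> k" "k \<le> n" for k
    using that(2)
  proof (induction k rule: inc_induct)
    case base
    then show ?case using fn by auto
  next
    case (step k)
    have k: "k \<in> {1..n-1}" "k + 1 \<in> {1..n}" "f k \<in> {1..n}"
      using step.hyps that(1) bij_betw_apply[OF bij] by auto
    have fixed: "f m = m" if "k < m" "m \<le> n" for m
      using step.IH that by simp
    have "cvec c' (f k) (f (k + 1)) = 1/2"
      using half k by (simp add: cvec_closed_form)
    then have "cvec c' (f k) (k + 1) = 1/2"
      using fixed[of "k + 1"] k by simp
    then have "f k = k \<or> k + 1 < f k"
      by (auto simp: cvec_closed_form split: if_splits)
    moreover have "\<not> k + 1 < f k"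
    proof
      assume "k + 1 < f k"
      then have "f (f k) = f k" "f k \<noteq> k"
        using fixed k by auto
      then show False
        using k bij by (metis atLeastAtMost_iff bij_betw_def inj_on_def diff_le_self order_trans)
    qed
    ultimately show ?case
      using fixed by (metis le_eq_less_or_eq)
  qed
  then show ?thesis
    by auto
qed

lemma cvec_eq_if_half_pattern_relabelled:
  assumes "valid_params n c" "valid_params n c'"
    and "bij_betw f {1..n} {1..n}" "f n = n"
    and half: "\<forall>k\<in>{1..n}. \<forall>i\<in>{1..n-1}. cvec c i k = 1/2 \<longleftrightarrow> cvec c' (f i) (f k) = 1/2"
  shows "\<forall>i\<in>{1..n-1}. cvec c i = cvec c' i"
proof -
  have f: "\<forall>k\<in>{1..n}. f k = k"
    using half_pattern_relabelling_is_id[OF assms(3,4)] half by blast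
  show ?thesis
  proof (intro ballI cvec_eqI)
    fix i k assume i: "i \<in> {1..n-1}" and k: "k \<in> {1..n}"
    have "f i = i" "f k = k"
      using f i k by auto
    then have "cvec c i k = 1/2 \<longleftrightarrow> cvec c' i k = 1/2"
      using half i k by metis
    moreover have "cvec c i k \<in> {0, 1/2}" "cvec c' i k \<in> {0, 1/2}"
      using cvec_in_halves assms(1,2) i by blast+
    ultimately show "cvec c i k = cvec c' i k"
      by auto
  qed
qed

lemma arcs_iso_fixes_last:
  assumes n: "n \<ge> 2" and bij: "bij_betw f {1..n} {1..n}"
    and arc: "\<forall>u\<in>{1..n}. \<forall>v\<in>{1..n}. (u, v) \<in> arcs n c \<longleftrightarrow> (f u, f v) \<in> arcs n c'"
  shows "f n = n"
proof -
  have last: "n \<in> {1..n}"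
    using n by simp
  then have "(n, n) \<in> arcs n c"
    using arcs_loop_iff[OF n] by simp
  then have "(f n, f n) \<in> arcs n c'"
    using arc last by blast
  then show "f n = n"
    using arcs_loop_iff[OF n bij_betw_apply[OF bij last]] by simp
qed

lemma arr_eq_iff_digraph_iso:
  assumes n: "n \<ge> 2" and valid: "valid_params n c" "valid_params n c'"
  shows "arr n c = arr n c' \<longleftrightarrow> digraph_iso {1..n} (arcs n c) {1..n} (arcs n c')"
proof
  assume "arr n c = arr n c'"
  then show "digraph_iso {1..n} (arcs n c) {1..n} (arcs n c')"
    unfolding digraph_iso_def arcs_def by (intro exI[of _ id]) simp
next
  assume "digraph_iso {1..n} (arcs n c) {1..n} (arcs n c')"
  then obtain f where bij: "bij_betw f {1..n} {1..n}"
    and arc: "\<forall>u\<in>{1..n}. \<forall>v\<in>{1..n}. (u, v) \<in> arcs n c \<longleftrightarrow> (f u, f v) \<in> arcs n c'"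
    unfolding digraph_iso_def by blast
  have fn: "f n = n"
    using n bij arc by (rule arcs_iso_fixes_last)
  have f_into: "f u \<in> {1..n}" if "u \<in> {1..n}" for u
    using bij that by (rule bij_betw_apply)
  have f_cols: "f i \<in> {1..n-1}" if "i \<in> {1..n-1}" for i
  proof -
    have i: "i \<noteq> n" "i \<in> {1..n}"
      using that by auto
    then have "f i \<noteq> f n"
      using bij n by (auto simp: bij_betw_def dest: inj_on_contraD)
    then show ?thesis
      using f_into[OF i(2)] fn by auto
  qed
  have "\<forall>k\<in>{1..n}. \<forall>i\<in>{1..n-1}. cvec c i k = 1/2 \<longleftrightarrow> cvec c' (f i) (f k) = 1/2"
  proof (intro ballI)
    fix k i assume k: "k \<in> {1..n}" and i: "i \<in> {1..n-1}"
    have "(k, i) \<in> arcs n c \<longleftrightarrow> (f k, f i) \<in> arcs n c'"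
      using arc k i by auto
    then show "cvec c i k = 1/2 \<longleftrightarrow> cvec c' (f i) (f k) = 1/2"
      using arcs_column_iff[OF k i] arcs_column_iff[OF f_into[OF k] f_cols[OF i]] by simp
  qed
  then show "arr n c = arr n c'"
    using cvec_eq_if_half_pattern_relabelled[OF valid bij fn] arr_eq_iff_cvec_eq by blast
qed

section \<open>Diagonal affine maps\<close>

definition sgn_on :: "nat set \<Rightarrow> nat \<Rightarrow> real" where
  "sgn_on S k = (if k \<in> S then -1 else 1)"

definition diag_aff :: "nat \<Rightarrow> nat set \<Rightarrow> (nat \<Rightarrow> real) \<Rightarrow> (nat \<Rightarrow> real) \<Rightarrow> (nat \<Rightarrow> real)" where
  "diag_aff n S v = (\<lambda>x\<in>Rn n. \<lambda>k. if k \<in> {1..n} then sgn_on S k * x k + v k else 0)"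

lemma sgn_on_mult_self [simp]: "sgn_on S k * sgn_on S k = 1"
  by (simp add: sgn_on_def)

lemma sgn_on_empty [simp]: "sgn_on {} k = 1"
  by (simp add: sgn_on_def)

lemma sgn_on_sym_diff: "sgn_on (sym_diff S T) k = sgn_on S k * sgn_on T k"
  by (auto simp: sgn_on_def)

lemma sgn_on_mult_diff_in_Ints:
  assumes "y - x \<in> \<int>" "2 * x \<in> \<int>"
  shows "sgn_on S k * y - x \<in> \<int>"
proof (cases "k \<in> S")
  case True
  then have "sgn_on S k * y - x = - (y - x) - 2 * x"
    by (simp add: sgn_on_def)
  also have "\<dots> \<in> \<int>"
    using Ints_diff[OF Ints_minus[OF assms(1)] assms(2)] .
  finally show ?thesis .
qed (use assms in \<open>simp add: sgn_on_def\<close>)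

lemma diag_aff_apply:
  "x \<in> Rn n \<Longrightarrow> diag_aff n S v x = (\<lambda>k. if k \<in> {1..n} then sgn_on S k * x k + v k else 0)"
  by (simp add: diag_aff_def)

lemma diag_aff_apply_coord:
  "x \<in> Rn n \<Longrightarrow> diag_aff n S v x k = (if k \<in> {1..n} then sgn_on S k * x k + v k else 0)"
  by (simp add: diag_aff_def)

lemma diag_aff_in_Rn: "x \<in> Rn n \<Longrightarrow> diag_aff n S v x \<in> Rn n"
  by (simp add: diag_aff_def Rn_def)

lemma compose_diag_aff:
  "compose (Rn n) (diag_aff n S v) (diag_aff n T w)
     = diag_aff n (sym_diff S T) (\<lambda>k. sgn_on S k * w k + v k)"
proof
  fix x
  show "compose (Rn n) (diag_aff n S v) (diag_aff n T w) x
      = diag_aff n (sym_diff S T) (\<lambda>k. sgn_on S k * w k + v k) x"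
  proof (cases "x \<in> Rn n")
    case True
    have "compose (Rn n) (diag_aff n S v) (diag_aff n T w) x = diag_aff n S v (diag_aff n T w x)"
      using True by (simp add: compose_def)
    also have "\<dots> = (\<lambda>k. if k \<in> {1..n} then sgn_on S k * diag_aff n T w x k + v k else 0)"
      using diag_aff_in_Rn[OF True] by (rule diag_aff_apply)
    also have "\<dots> = diag_aff n (sym_diff S T) (\<lambda>k. sgn_on S k * w k + v k) x"
      using True by (simp add: diag_aff_apply diag_aff_apply_coord sgn_on_sym_diff algebra_simps cong: if_cong)
    finally show ?thesis .
  qed (simp add: compose_def diag_aff_def)
qed

lemma diag_aff_0_eq_restrict_id: "diag_aff n {} (\<lambda>k. 0) = (\<lambda>x\<in>Rn n. x)"
  unfolding diag_aff_def by (intro restrict_ext ext) (auto simp: Rn_def)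

lemma diag_aff_in_Bij: "diag_aff n S v \<in> Bij (Rn n)"
proof -
  let ?g = "diag_aff n S (\<lambda>k. - sgn_on S k * v k)"
  have comp: "compose (Rn n) ?g (diag_aff n S v) = (\<lambda>x\<in>Rn n. x)"
    "compose (Rn n) (diag_aff n S v) ?g = (\<lambda>x\<in>Rn n. x)"
    by (simp_all add: compose_diag_aff algebra_simps flip: diag_aff_0_eq_restrict_id)
  have "?g (diag_aff n S v x) = x" "diag_aff n S v (?g x) = x" if "x \<in> Rn n" for x
    using fun_cong[OF comp(1), of x] fun_cong[OF comp(2), of x] that by (simp_all add: compose_def)
  then have "bij_betw (diag_aff n S v) (Rn n) (Rn n)"
    by (intro bij_betw_byWitness[where f' = ?g]) (auto simp: diag_aff_in_Rn)
  then show ?thesis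
    by (simp add: Bij_def diag_aff_def)
qed

lemma diag_aff_eq_iff:
  "diag_aff n S v = diag_aff n T w \<longleftrightarrow> (\<forall>k\<in>{1..n}. (k \<in> S \<longleftrightarrow> k \<in> T) \<and> v k = w k)"
proof
  assume eq: "diag_aff n S v = diag_aff n T w"
  have at_zero: "v k = w k" if "k \<in> {1..n}" for k
  proof -
    have "(\<lambda>k. 0) \<in> Rn n"
      by (simp add: Rn_def)
    then show ?thesis
      using fun_cong[OF eq, of "\<lambda>k. 0"] that by (auto simp: diag_aff_apply dest: fun_cong[where x = k])
  qed
  have "k \<in> S \<longleftrightarrow> k \<in> T" if k: "k \<in> {1..n}" for k
  proof -
    have "unitv k \<in> Rn n"
      using k by (simp add: Rn_def unitv_def)
    then have "sgn_on S k = sgn_on T k"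
      using fun_cong[OF eq, of "unitv k"] k at_zero[OF k]
      by (auto simp: diag_aff_apply unitv_def dest: fun_cong[where x = k])
    then show ?thesis
      by (auto simp: sgn_on_def split: if_splits)
  qed
  then show "\<forall>k\<in>{1..n}. (k \<in> S \<longleftrightarrow> k \<in> T) \<and> v k = w k"
    using at_zero by blast
next
  assume "\<forall>k\<in>{1..n}. (k \<in> S \<longleftrightarrow> k \<in> T) \<and> v k = w k"
  then show "diag_aff n S v = diag_aff n T w"
    unfolding diag_aff_def sgn_on_def by (intro ext) auto
qed

lemma BijGroup_mult_diag_aff:
  "diag_aff n S v \<otimes>\<^bsub>BijGroup (Rn n)\<^esub> diag_aff n T w
     = diag_aff n (sym_diff S T) (\<lambda>k. sgn_on S k * w k + v k)"
  by (simp add: BijGroup_def diag_aff_in_Bij compose_diag_aff)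

lemma BijGroup_one_eq_diag_aff: "\<one>\<^bsub>BijGroup (Rn n)\<^esub> = diag_aff n {} (\<lambda>k. 0)"
  by (simp add: BijGroup_def diag_aff_0_eq_restrict_id)

lemma BijGroup_inv_diag_aff:
  "inv\<^bsub>BijGroup (Rn n)\<^esub> (diag_aff n S v) = diag_aff n S (\<lambda>k. - sgn_on S k * v k)"
proof (rule group.inv_equality[OF group_BijGroup])
  show "diag_aff n S (\<lambda>k. - sgn_on S k * v k) \<otimes>\<^bsub>BijGroup (Rn n)\<^esub> diag_aff n S v
      = \<one>\<^bsub>BijGroup (Rn n)\<^esub>"
    by (simp add: BijGroup_mult_diag_aff BijGroup_one_eq_diag_aff algebra_simps)
qed (simp_all add: BijGroup_def diag_aff_in_Bij)

lemma genC_eq_diag_aff: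
  assumes "i \<in> {1..n-1}"
  shows "genC n c i = diag_aff n {i} (cvec c i)"
proof -
  have "cvec c i k = 0" if "k \<notin> {1..n}" for k
    using assms that by (intro cvec_eq_0_outside) auto
  then show ?thesis
    unfolding genC_def diag_aff_def Cmat_def sgn_on_def Rn_def by (auto intro!: ext)
qed

lemma transl_eq_diag_aff: "j \<in> {1..n} \<Longrightarrow> transl n j = diag_aff n {} (unitv j)"
  unfolding transl_def diag_aff_def Rn_def unitv_def by (auto intro!: ext)

section \<open>Group-theoretic invariants\<close>

definition commutes_with_conjugates :: "('a, 'b) monoid_scheme \<Rightarrow> 'a \<Rightarrow> bool" where
  "commutes_with_conjugates G t \<longleftrightarrow> t \<in> carrier G \<and>
     (\<forall>h\<in>carrier G. t \<otimes>\<^bsub>G\<^esub> (h \<otimes>\<^bsub>G\<^esub> t \<otimes>\<^bsub>G\<^esub> inv\<^bsub>G\<^esub> h) = (h \<otimes>\<^bsub>G\<^esub> t \<otimes>\<^bsub>G\<^esub> inv\<^bsub>G\<^esub> h) \<otimes>\<^bsub>G\<^esub> t)"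

text \<open>t g t = g says that conjugation by g inverts t: g\<inverse> t g = t\<inverse>.\<close>
definition inverts :: "('a, 'b) monoid_scheme \<Rightarrow> 'a \<Rightarrow> 'a \<Rightarrow> bool" where
  "inverts G g t \<longleftrightarrow> t \<otimes>\<^bsub>G\<^esub> g \<otimes>\<^bsub>G\<^esub> t = g"

definition minimally_inverting :: "('a, 'b) monoid_scheme \<Rightarrow> 'a \<Rightarrow> bool" where
  "minimally_inverting G g \<longleftrightarrow> g \<in> carrier G \<and> \<not> commutes_with_conjugates G g \<and>
     (\<forall>d\<in>carrier G. \<not> commutes_with_conjugates G d
        \<and> (\<forall>t\<in>carrier G. commutes_with_conjugates G t \<and> inverts G d t \<longrightarrow> inverts G g t)
        \<longrightarrow> (\<forall>t\<in>carrier G. commutes_with_conjugates G t \<and> inverts G g t \<longrightarrow> inverts G d t))"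

definition commutes_mod_squares :: "('a, 'b) monoid_scheme \<Rightarrow> 'a \<Rightarrow> 'a \<Rightarrow> bool" where
  "commutes_mod_squares G w d \<longleftrightarrow> (\<exists>t\<in>carrier G. commutes_with_conjugates G t \<and>
     (w \<otimes>\<^bsub>G\<^esub> t \<otimes>\<^bsub>G\<^esub> t) \<otimes>\<^bsub>G\<^esub> d = d \<otimes>\<^bsub>G\<^esub> (w \<otimes>\<^bsub>G\<^esub> t \<otimes>\<^bsub>G\<^esub> t))"

definition inverted_mod_squares :: "('a, 'b) monoid_scheme \<Rightarrow> 'a \<Rightarrow> bool" where
  "inverted_mod_squares G w \<longleftrightarrow> (\<exists>t\<in>carrier G. commutes_with_conjugates G t \<and>
     (\<exists>e\<in>carrier G. inverts G e (w \<otimes>\<^bsub>G\<^esub> t \<otimes>\<^bsub>G\<^esub> t)))"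

locale group_iso = group_hom +
  assumes bij_h: "bij_betw h (carrier G) (carrier H)"
begin

lemma carrier_H_eq_image: "carrier H = h ` carrier G"
  using bij_h by (simp add: bij_betw_def)

lemma ball_carrier_H: "(\<forall>y\<in>carrier H. P y) \<longleftrightarrow> (\<forall>x\<in>carrier G. P (h x))"
  unfolding carrier_H_eq_image by blast

lemma bex_carrier_H: "(\<exists>y\<in>carrier H. P y) \<longleftrightarrow> (\<exists>x\<in>carrier G. P (h x))"
  unfolding carrier_H_eq_image by blast

lemma h_eq_iff: "x \<in> carrier G \<Longrightarrow> y \<in> carrier G \<Longrightarrow> h x = h y \<longleftrightarrow> x = y"
  using bij_h by (auto simp: bij_betw_def inj_on_def)

lemmas fold_hom = hom_mult[symmetric] hom_inv[symmetric] h_eq_iff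

lemma commutes_with_conjugates_hom_iff:
  "x \<in> carrier G \<Longrightarrow> commutes_with_conjugates H (h x) \<longleftrightarrow> commutes_with_conjugates G x"
  unfolding commutes_with_conjugates_def ball_carrier_H by (simp add: fold_hom del: hom_mult hom_inv)

lemma inverts_hom_iff:
  "x \<in> carrier G \<Longrightarrow> t \<in> carrier G \<Longrightarrow> inverts H (h x) (h t) \<longleftrightarrow> inverts G x t"
  unfolding inverts_def by (simp add: fold_hom del: hom_mult hom_inv)

lemma minimally_inverting_hom_iff:
  "x \<in> carrier G \<Longrightarrow> minimally_inverting H (h x) \<longleftrightarrow> minimally_inverting G x"
  unfolding minimally_inverting_def ball_carrier_H
  by (simp add: commutes_with_conjugates_hom_iff inverts_hom_iff)

lemma commutes_mod_squares_hom_iff: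
  "w \<in> carrier G \<Longrightarrow> d \<in> carrier G \<Longrightarrow> commutes_mod_squares H (h w) (h d) \<longleftrightarrow> commutes_mod_squares G w d"
  unfolding commutes_mod_squares_def bex_carrier_H
  by (simp add: commutes_with_conjugates_hom_iff fold_hom del: hom_mult hom_inv)

lemma inverted_mod_squares_hom_iff:
  "w \<in> carrier G \<Longrightarrow> inverted_mod_squares H (h w) \<longleftrightarrow> inverted_mod_squares G w"
  unfolding inverted_mod_squares_def bex_carrier_H
  by (simp add: commutes_with_conjugates_hom_iff inverts_hom_iff fold_hom del: hom_mult hom_inv)

end

section \<open>The elements of the group\<close>

definition cvec_sum :: "(nat \<Rightarrow> nat \<Rightarrow> real) \<Rightarrow> nat set \<Rightarrow> nat \<Rightarrow> real" where
  "cvec_sum c S k = (\<Sum>i\<in>S. cvec c i k)"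

definition admissible :: "nat \<Rightarrow> (nat \<Rightarrow> nat \<Rightarrow> real) \<Rightarrow> nat set \<Rightarrow> (nat \<Rightarrow> real) \<Rightarrow> bool" where
  "admissible n c S v \<longleftrightarrow> S \<subseteq> {1..n-1} \<and> (\<forall>k\<in>{1..n}. v k - cvec_sum c S k \<in> \<int>)"

lemma admissible_subset: "admissible n c S v \<Longrightarrow> S \<subseteq> {1..n}"
  by (auto simp: admissible_def subset_iff)

lemma generator_admissible:
  assumes "h \<in> {genC n c i | i. 1 \<le> i \<and> i \<le> n - 1} \<union> {transl n j | j. 1 \<le> j \<and> j \<le> n}"
  shows "\<exists>S v. h = diag_aff n S v \<and> admissible n c S v"
proof -
  consider (reflection) i where "h = genC n c i" "i \<in> {1..n-1}"
    | (translation) j where "h = transl n j" "j \<in> {1..n}"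
    using assms by auto
  then show ?thesis
  proof cases
    case reflection
    then have "h = diag_aff n {i} (cvec c i)"
      by (simp add: genC_eq_diag_aff)
    moreover have "admissible n c {i} (cvec c i)"
      using reflection by (simp add: admissible_def cvec_sum_def)
    ultimately show ?thesis
      by blast
  next
    case translation
    then have "h = diag_aff n {} (unitv j)"
      by (simp add: transl_eq_diag_aff)
    moreover have "admissible n c {} (unitv j)"
      by (simp add: admissible_def cvec_sum_def unitv_def)
    ultimately show ?thesis
      by blast
  qed
qed

lemma two_cvec_sum_in_Ints:
  assumes "valid_params n c" "S \<subseteq> {1..n-1}"
  shows "2 * cvec_sum c S k \<in> \<int>"
proof -
  have "2 * cvec_sum c S k = (\<Sum>i\<in>S. 2 * cvec c i k)"
    by (simp add: cvec_sum_def sum_distrib_left)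
  also have "\<dots> \<in> \<int>"
    using two_cvec_in_Ints[OF assms(1)] assms(2) by (intro Ints_sum) auto
  finally show ?thesis .
qed

lemma cvec_sum_sym_diff:
  assumes "finite S" "finite T"
  shows "cvec_sum c S k + cvec_sum c T k = cvec_sum c (sym_diff S T) k + 2 * cvec_sum c (S \<inter> T) k"
proof -
  let ?f = "\<lambda>i. cvec c i k"
  have "sum ?f S = sum ?f (S \<inter> T) + sum ?f (S - T)" "sum ?f T = sum ?f (S \<inter> T) + sum ?f (T - S)"
    using sum.Int_Diff[OF assms(1), of ?f T] sum.Int_Diff[OF assms(2), of ?f S]
    by (simp_all add: Int_commute)
  moreover have "sum ?f (sym_diff S T) = sum ?f (S - T) + sum ?f (T - S)"
    using assms by (intro sum.union_disjoint) auto
  ultimately show ?thesis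
    by (simp add: cvec_sum_def)
qed

lemma admissible_mult:
  assumes valid: "valid_params n c" and S: "admissible n c S v" and T: "admissible n c T w"
  shows "admissible n c (sym_diff S T) (\<lambda>k. sgn_on S k * w k + v k)"
proof -
  have sub: "S \<subseteq> {1..n-1}" "T \<subseteq> {1..n-1}"
    using S T by (simp_all add: admissible_def)
  have "sgn_on S k * w k + v k - cvec_sum c (sym_diff S T) k \<in> \<int>" if k: "k \<in> {1..n}" for k
  proof -
    have "sgn_on S k * w k - cvec_sum c T k \<in> \<int>"
      using T k two_cvec_sum_in_Ints[OF valid sub(2)]
      by (intro sgn_on_mult_diff_in_Ints) (simp_all add: admissible_def)
    moreover have "v k - cvec_sum c S k \<in> \<int>"
      using S k by (simp add: admissible_def)
    moreover have "2 * cvec_sum c (S \<inter> T) k \<in> \<int>"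
      using sub by (intro two_cvec_sum_in_Ints[OF valid]) auto
    ultimately have "(sgn_on S k * w k - cvec_sum c T k) + (v k - cvec_sum c S k)
        + 2 * cvec_sum c (S \<inter> T) k \<in> \<int>"
      by (intro Ints_add)
    moreover have "finite S" "finite T"
      using sub by (auto intro: finite_subset)
    ultimately show ?thesis
      using cvec_sum_sym_diff[of S T c k] by (simp add: algebra_simps)
  qed
  moreover have "sym_diff S T \<subseteq> {1..n-1}"
    using sub by auto
  ultimately show ?thesis
    by (simp add: admissible_def)
qed

lemma admissible_inv:
  assumes valid: "valid_params n c" and S: "admissible n c S v"
  shows "admissible n c S (\<lambda>k. - sgn_on S k * v k)"
proof -
  have sub: "S \<subseteq> {1..n-1}"
    using S by (simp add: admissible_def)
  have "- sgn_on S k * v k - cvec_sum c S k \<in> \<int>" if k: "k \<in> {1..n}" for k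
  proof -
    have "sgn_on S k * v k - cvec_sum c S k \<in> \<int>"
      using S k two_cvec_sum_in_Ints[OF valid sub]
      by (intro sgn_on_mult_diff_in_Ints) (simp_all add: admissible_def)
    then have "- (sgn_on S k * v k - cvec_sum c S k) - 2 * cvec_sum c S k \<in> \<int>"
      using Ints_diff[OF Ints_minus two_cvec_sum_in_Ints[OF valid sub]] by blast
    also have "- (sgn_on S k * v k - cvec_sum c S k) - 2 * cvec_sum c S k
        = - sgn_on S k * v k - cvec_sum c S k"
      by simp
    finally show ?thesis .
  qed
  then show ?thesis
    using sub by (simp add: admissible_def)
qed

lemma Kgroup_eq_if_cvec_eq:
  assumes "\<forall>i\<in>{1..n-1}. cvec c i = cvec c' i"
  shows "Kgroup n c = Kgroup n c'"
proof -
  have "genC n c i = genC n c' i" if "1 \<le> i" "i \<le> n - 1" for i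
    using assms that by (simp add: genC_def)
  then have "{genC n c i |i. 1 \<le> i \<and> i \<le> n - 1} = {genC n c' i |i. 1 \<le> i \<and> i \<le> n - 1}"
    by (intro Collect_cong) metis
  then show ?thesis
    unfolding Kgroup_def by simp
qed

locale Kgroup_setting =
  fixes n :: nat and c :: "nat \<Rightarrow> nat \<Rightarrow> real"
  assumes two_le_n: "2 \<le> n" and valid: "valid_params n c"
begin

lemma group_Kgroup: "group (Kgroup n c)"
  unfolding Kgroup_def by (rule group.group_subgroup_generated[OF group_BijGroup])

sublocale K: group "Kgroup n c"
  by (rule group_Kgroup)

lemma mult_Kgroup: "mult (Kgroup n c) = mult (BijGroup (Rn n))"
  by (simp add: Kgroup_def)

lemma one_Kgroup: "\<one>\<^bsub>Kgroup n c\<^esub> = diag_aff n {} (\<lambda>k. 0)"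
  by (simp add: Kgroup_def BijGroup_one_eq_diag_aff)

lemma inv_Kgroup: "x \<in> carrier (Kgroup n c) \<Longrightarrow> inv\<^bsub>Kgroup n c\<^esub> x = inv\<^bsub>BijGroup (Rn n)\<^esub> x"
  unfolding Kgroup_def by (rule group.inv_subgroup_generated[OF group_BijGroup])

lemma mult_Kgroup_diag_aff [simp]:
  "diag_aff n S v \<otimes>\<^bsub>Kgroup n c\<^esub> diag_aff n T w
     = diag_aff n (sym_diff S T) (\<lambda>k. sgn_on S k * w k + v k)"
  by (simp add: mult_Kgroup BijGroup_mult_diag_aff)

lemma inv_Kgroup_diag_aff:
  "diag_aff n S v \<in> carrier (Kgroup n c)
     \<Longrightarrow> inv\<^bsub>Kgroup n c\<^esub> (diag_aff n S v) = diag_aff n S (\<lambda>k. - sgn_on S k * v k)"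
  by (simp add: inv_Kgroup BijGroup_inv_diag_aff)

lemma generator_mem:
  assumes "h \<in> {genC n c i | i. 1 \<le> i \<and> i \<le> n - 1} \<union> {transl n j | j. 1 \<le> j \<and> j \<le> n}"
  shows "h \<in> carrier (Kgroup n c)"
proof -
  have "h \<in> carrier (BijGroup (Rn n))"
    using assms by (auto simp: BijGroup_def genC_eq_diag_aff transl_eq_diag_aff diag_aff_in_Bij)
  then show ?thesis
    using assms unfolding Kgroup_def carrier_subgroup_generated by (blast intro: generate.incl)
qed

lemma genC_mem:
  assumes "i \<in> {1..n-1}"
  shows "diag_aff n {i} (cvec c i) \<in> carrier (Kgroup n c)"
proof -
  have "genC n c i \<in> carrier (Kgroup n c)"
    using assms by (intro generator_mem) auto
  then show ?thesis
    using assms by (simp add: genC_eq_diag_aff)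
qed

lemma transl_mem:
  assumes "j \<in> {1..n}"
  shows "diag_aff n {} (unitv j) \<in> carrier (Kgroup n c)"
proof -
  have "transl n j \<in> carrier (Kgroup n c)"
    using assms by (intro generator_mem) auto
  then show ?thesis
    using assms by (simp add: transl_eq_diag_aff)
qed

lemma mem_imp_admissible:
  assumes "g \<in> carrier (Kgroup n c)"
  shows "\<exists>S v. g = diag_aff n S v \<and> admissible n c S v"
proof -
  let ?gens = "{genC n c i | i. 1 \<le> i \<and> i \<le> n - 1} \<union> {transl n j | j. 1 \<le> j \<and> j \<le> n}"
  have "g \<in> generate (BijGroup (Rn n)) (carrier (BijGroup (Rn n)) \<inter> ?gens)"
    using assms by (simp add: Kgroup_def carrier_subgroup_generated)
  then show ?thesis
  proof (induction rule: generate.induct)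
    case one
    have "admissible n c {} (\<lambda>k. 0)"
      by (simp add: admissible_def cvec_sum_def)
    then show ?case
      using BijGroup_one_eq_diag_aff by blast
  next
    case (incl h)
    then show ?case
      using generator_admissible by blast
  next
    case (inv h)
    then obtain S v where "h = diag_aff n S v" "admissible n c S v"
      using generator_admissible by blast
    then show ?case
      using admissible_inv[OF valid] BijGroup_inv_diag_aff by blast
  next
    case (eng h1 h2)
    then obtain S v T w where "h1 = diag_aff n S v" "admissible n c S v"
      "h2 = diag_aff n T w" "admissible n c T w"
      by blast
    then show ?case
      using admissible_mult[OF valid] BijGroup_mult_diag_aff by blast
  qed
qed

lemma integer_multiple_translation_mem:
  assumes j: "j \<in> {1..n}"
  shows "diag_aff n {} (\<lambda>k. of_int z * unitv j k) \<in> carrier (Kgroup n c)"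
proof (induction z rule: int_induct[where k = 0])
  case base
  then show ?case
    using K.one_closed by (simp add: one_Kgroup)
next
  case (step1 z)
  have "diag_aff n {} (unitv j) \<otimes>\<^bsub>Kgroup n c\<^esub> diag_aff n {} (\<lambda>k. of_int z * unitv j k)
      = diag_aff n {} (\<lambda>k. of_int (z + 1) * unitv j k)"
    by (simp add: algebra_simps)
  then show ?case
    using K.m_closed[OF transl_mem[OF j] step1.IH] by simp
next
  case (step2 z)
  have "inv\<^bsub>Kgroup n c\<^esub> diag_aff n {} (unitv j) \<otimes>\<^bsub>Kgroup n c\<^esub> diag_aff n {} (\<lambda>k. of_int z * unitv j k)
      = diag_aff n {} (\<lambda>k. of_int (z - 1) * unitv j k)"
    by (simp add: inv_Kgroup_diag_aff[OF transl_mem[OF j]] algebra_simps)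
  then show ?case
    using K.m_closed[OF K.inv_closed[OF transl_mem[OF j]] step2.IH] by simp
qed

lemma integral_translation_mem:
  assumes "\<forall>k\<in>{1..n}. w k \<in> \<int>"
  shows "diag_aff n {} w \<in> carrier (Kgroup n c)"
proof -
  have "diag_aff n {} (\<lambda>k. \<Sum>j\<in>J. w j * unitv j k) \<in> carrier (Kgroup n c)" if "J \<subseteq> {1..n}" for J
  proof -
    have "finite J"
      using that finite_subset by blast
    then show ?thesis
      using that
    proof (induction J rule: finite_induct)
      case empty
      then show ?case
        using K.one_closed by (simp add: one_Kgroup)
    next
      case (insert j J)
      have "w j \<in> \<int>"
        using assms insert.prems by simp
      then obtain z where z: "w j = of_int z"
        by (elim Ints_cases)
      have eq: "diag_aff n {} (\<lambda>k. of_int z * unitv j k) \<otimes>\<^bsub>Kgroup n c\<^esub> diag_aff n {} (\<lambda>k. \<Sum>j\<in>J. w j * unitv j k)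
          = diag_aff n {} (\<lambda>k. \<Sum>j\<in>insert j J. w j * unitv j k)"
        using insert.hyps z by (simp add: add.commute)
      have "diag_aff n {} (\<lambda>k. of_int z * unitv j k) \<in> carrier (Kgroup n c)"
        using insert.prems by (intro integer_multiple_translation_mem) simp
      moreover have "diag_aff n {} (\<lambda>k. \<Sum>j\<in>J. w j * unitv j k) \<in> carrier (Kgroup n c)"
        using insert.IH insert.prems by simp
      ultimately show ?case
        using K.m_closed by (simp only: flip: eq)
    qed
  qed
  moreover have "diag_aff n {} (\<lambda>k. \<Sum>j\<in>{1..n}. w j * unitv j k) = diag_aff n {} w"
    unfolding diag_aff_eq_iff unitv_def by (simp add: if_distrib cong: if_cong)
  ultimately show ?thesis
    by (metis order_refl)
qed

lemma admissible_imp_mem: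
  assumes "admissible n c S v"
  shows "diag_aff n S v \<in> carrier (Kgroup n c)"
proof -
  have "finite S" "S \<subseteq> {1..n-1}"
    using assms finite_subset by (auto simp: admissible_def)
  then show ?thesis
    using assms
  proof (induction S arbitrary: v rule: finite_induct)
    case empty
    then show ?case
      by (simp add: admissible_def cvec_sum_def integral_translation_mem)
  next
    case (insert i F)
    define w where "w k = sgn_on {i} k * (v k - cvec c i k)" for k
    have i: "i \<in> {1..n-1}" and F: "F \<subseteq> {1..n-1}"
      using insert.prems by auto
    have "w k - cvec_sum c F k \<in> \<int>" if k: "k \<in> {1..n}" for k
    proof -
      have "v k - cvec_sum c (insert i F) k \<in> \<int>"
        using insert.prems k by (simp add: admissible_def)
      then have "(v k - cvec c i k) - cvec_sum c F k \<in> \<int>"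
        using insert.hyps by (simp add: cvec_sum_def algebra_simps)
      then show ?thesis
        unfolding w_def using two_cvec_sum_in_Ints[OF valid F] by (rule sgn_on_mult_diff_in_Ints)
    qed
    then have mem: "diag_aff n F w \<in> carrier (Kgroup n c)"
      using insert.IH F by (simp add: admissible_def)
    have eq: "diag_aff n {i} (cvec c i) \<otimes>\<^bsub>Kgroup n c\<^esub> diag_aff n F w = diag_aff n (insert i F) v"
    proof -
      have "sym_diff {i} F = insert i F"
        using insert.hyps by auto
      moreover have "(\<lambda>k. sgn_on {i} k * w k + cvec c i k) = v"
        by (simp add: w_def mult.assoc[symmetric])
      ultimately show ?thesis
        by simp
    qed
    show ?case
      using K.m_closed[OF genC_mem[OF i] mem] by (simp only: eq)
  qed
qed

theorem carrier_Kgroup: "carrier (Kgroup n c) = {diag_aff n S v | S v. admissible n c S v}"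
  using mem_imp_admissible admissible_imp_mem by blast

lemma ball_carrier_Kgroup:
  "(\<forall>g\<in>carrier (Kgroup n c). P g) \<longleftrightarrow> (\<forall>S v. admissible n c S v \<longrightarrow> P (diag_aff n S v))"
  unfolding carrier_Kgroup by blast

lemma commutes_with_conjugates_iff:
  assumes "admissible n c S v"
  shows "commutes_with_conjugates (Kgroup n c) (diag_aff n S v) \<longleftrightarrow> S = {}"
proof
  assume commutes: "commutes_with_conjugates (Kgroup n c) (diag_aff n S v)"
  show "S = {}"
  proof (rule ccontr)
    assume "S \<noteq> {}"
    then obtain k where k: "k \<in> S"
      by blast
    then have "k \<in> {1..n}"
      using admissible_subset[OF assms] by blast
    then have h: "diag_aff n {} (unitv k) \<in> carrier (Kgroup n c)"
      by (rule transl_mem)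
    let ?w = "\<lambda>j. sgn_on S j * - unitv k j + (v j + unitv k j)"
    let ?conj = "diag_aff n {} (unitv k) \<otimes>\<^bsub>Kgroup n c\<^esub> diag_aff n S v \<otimes>\<^bsub>Kgroup n c\<^esub>
        inv\<^bsub>Kgroup n c\<^esub> diag_aff n {} (unitv k)"
    have conj: "?conj = diag_aff n S ?w"
      by (simp add: inv_Kgroup_diag_aff[OF h])
    have "diag_aff n S v \<otimes>\<^bsub>Kgroup n c\<^esub> ?conj = ?conj \<otimes>\<^bsub>Kgroup n c\<^esub> diag_aff n S v"
      using commutes h unfolding commutes_with_conjugates_def by blast
    then have "diag_aff n S v \<otimes>\<^bsub>Kgroup n c\<^esub> diag_aff n S ?w = diag_aff n S ?w \<otimes>\<^bsub>Kgroup n c\<^esub> diag_aff n S v"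
      unfolding conj .
    then have "sgn_on S k * ?w k + v k = sgn_on S k * v k + ?w k"
      using \<open>k \<in> {1..n}\<close> by (simp add: diag_aff_eq_iff)
    then show False
      using k by (simp add: sgn_on_def unitv_def)
  qed
next
  assume "S = {}"
  then show "commutes_with_conjugates (Kgroup n c) (diag_aff n S v)"
    using admissible_imp_mem[OF assms]
    by (auto simp: commutes_with_conjugates_def ball_carrier_Kgroup inv_Kgroup_diag_aff
        admissible_imp_mem algebra_simps)
qed

lemma commutes_with_conjugates_imp_translation:
  assumes "commutes_with_conjugates (Kgroup n c) t"
  obtains m where "t = diag_aff n {} m" "\<forall>k\<in>{1..n}. m k \<in> \<int>"
proof -
  have "t \<in> carrier (Kgroup n c)"
    using assms by (simp add: commutes_with_conjugates_def)
  then obtain S m where t: "t = diag_aff n S m" and adm: "admissible n c S m"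
    using mem_imp_admissible by blast
  then have "S = {}"
    using assms commutes_with_conjugates_iff by blast
  then show ?thesis
    using that t adm by (simp add: admissible_def cvec_sum_def)
qed

lemma inverts_translation_iff:
  "inverts (Kgroup n c) (diag_aff n S v) (diag_aff n {} m) \<longleftrightarrow> (\<forall>k\<in>{1..n}. k \<notin> S \<longrightarrow> m k = 0)"
  by (auto simp: inverts_def diag_aff_eq_iff sgn_on_def)

lemma inverted_translations_subset_iff:
  assumes "admissible n c T u" "admissible n c S v"
  shows "(\<forall>t\<in>carrier (Kgroup n c). commutes_with_conjugates (Kgroup n c) t
            \<and> inverts (Kgroup n c) (diag_aff n T u) t \<longrightarrow> inverts (Kgroup n c) (diag_aff n S v) t)
         \<longleftrightarrow> T \<subseteq> S"
proof
  assume inverted: "\<forall>t\<in>carrier (Kgroup n c). commutes_with_conjugates (Kgroup n c) t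
      \<and> inverts (Kgroup n c) (diag_aff n T u) t \<longrightarrow> inverts (Kgroup n c) (diag_aff n S v) t"
  show "T \<subseteq> S"
  proof
    fix k assume "k \<in> T"
    then have k: "k \<in> {1..n}"
      using admissible_subset[OF assms(1)] by blast
    have "admissible n c {} (unitv k)"
      by (simp add: admissible_def cvec_sum_def unitv_def)
    then have "commutes_with_conjugates (Kgroup n c) (diag_aff n {} (unitv k))"
      by (simp add: commutes_with_conjugates_iff)
    moreover have "inverts (Kgroup n c) (diag_aff n T u) (diag_aff n {} (unitv k))"
      using \<open>k \<in> T\<close> by (auto simp: inverts_translation_iff unitv_def)
    ultimately have "inverts (Kgroup n c) (diag_aff n S v) (diag_aff n {} (unitv k))"
      using inverted transl_mem[OF k] by blast
    then show "k \<in> S"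
      using k by (auto simp: inverts_translation_iff unitv_def)
  qed
next
  assume sub: "T \<subseteq> S"
  show "\<forall>t\<in>carrier (Kgroup n c). commutes_with_conjugates (Kgroup n c) t
      \<and> inverts (Kgroup n c) (diag_aff n T u) t \<longrightarrow> inverts (Kgroup n c) (diag_aff n S v) t"
  proof (intro ballI impI)
    fix t
    assume t: "commutes_with_conjugates (Kgroup n c) t \<and> inverts (Kgroup n c) (diag_aff n T u) t"
    then obtain m where m: "t = diag_aff n {} m"
      by (auto elim: commutes_with_conjugates_imp_translation)
    show "inverts (Kgroup n c) (diag_aff n S v) t"
      using t sub unfolding m inverts_translation_iff by blast
  qed
qed

lemma minimally_inverting_iff:
  assumes adm: "admissible n c S v"
  shows "minimally_inverting (Kgroup n c) (diag_aff n S v) \<longleftrightarrow> (\<exists>i. S = {i})"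
proof
  assume minimal: "minimally_inverting (Kgroup n c) (diag_aff n S v)"
  then have "S \<noteq> {}"
    using commutes_with_conjugates_iff[OF adm] by (auto simp: minimally_inverting_def)
  then obtain i where i: "i \<in> S"
    by blast
  have adm_i: "admissible n c {i} (cvec c i)"
    using adm i by (auto simp: admissible_def cvec_sum_def)
  have "\<not> commutes_with_conjugates (Kgroup n c) (diag_aff n {i} (cvec c i))"
    using commutes_with_conjugates_iff[OF adm_i] by simp
  moreover have "\<forall>t\<in>carrier (Kgroup n c). commutes_with_conjugates (Kgroup n c) t
      \<and> inverts (Kgroup n c) (diag_aff n {i} (cvec c i)) t \<longrightarrow> inverts (Kgroup n c) (diag_aff n S v) t"
    using inverted_translations_subset_iff[OF adm_i adm] i by simp
  ultimately have "\<forall>t\<in>carrier (Kgroup n c). commutes_with_conjugates (Kgroup n c) t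
      \<and> inverts (Kgroup n c) (diag_aff n S v) t \<longrightarrow> inverts (Kgroup n c) (diag_aff n {i} (cvec c i)) t"
    using minimal admissible_imp_mem[OF adm_i] unfolding minimally_inverting_def by blast
  then have "S \<subseteq> {i}"
    using inverted_translations_subset_iff[OF adm adm_i] by simp
  then show "\<exists>i. S = {i}"
    using i by blast
next
  assume "\<exists>i. S = {i}"
  then obtain i where S: "S = {i}"
    by blast
  have "\<forall>t\<in>carrier (Kgroup n c). commutes_with_conjugates (Kgroup n c) t
      \<and> inverts (Kgroup n c) (diag_aff n S v) t \<longrightarrow> inverts (Kgroup n c) d t"
    if d: "d \<in> carrier (Kgroup n c)" "\<not> commutes_with_conjugates (Kgroup n c) d"
      "\<forall>t\<in>carrier (Kgroup n c). commutes_with_conjugates (Kgroup n c) t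
         \<and> inverts (Kgroup n c) d t \<longrightarrow> inverts (Kgroup n c) (diag_aff n S v) t"
    for d
  proof -
    obtain T u where d_eq: "d = diag_aff n T u" and adm_d: "admissible n c T u"
      using mem_imp_admissible d(1) by blast
    have "T \<noteq> {}" "T \<subseteq> S"
      using d(2,3) commutes_with_conjugates_iff[OF adm_d] inverted_translations_subset_iff[OF adm_d adm]
      unfolding d_eq by simp_all
    then have "S \<subseteq> T"
      using S by blast
    then show ?thesis
      using inverted_translations_subset_iff[OF adm adm_d] unfolding d_eq by simp
  qed
  moreover have "\<not> commutes_with_conjugates (Kgroup n c) (diag_aff n S v)"
    using commutes_with_conjugates_iff[OF adm] S by simp
  ultimately show "minimally_inverting (Kgroup n c) (diag_aff n S v)"
    using admissible_imp_mem[OF adm] unfolding minimally_inverting_def by blast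
qed

lemma commutes_translation_iff:
  assumes "j \<in> {1..n}"
  shows "diag_aff n {} q \<otimes>\<^bsub>Kgroup n c\<^esub> diag_aff n {j} u = diag_aff n {j} u \<otimes>\<^bsub>Kgroup n c\<^esub> diag_aff n {} q
    \<longleftrightarrow> q j = 0"
  using assms by (auto simp: diag_aff_eq_iff sgn_on_def)

lemma square_translation_mult:
  "diag_aff n {} m \<otimes>\<^bsub>Kgroup n c\<^esub> diag_aff n {} p \<otimes>\<^bsub>Kgroup n c\<^esub> diag_aff n {} p
     = diag_aff n {} (\<lambda>k. m k + 2 * p k)"
  by (simp add: algebra_simps)

lemma integer_unit_translation:
  assumes "z \<in> \<int>"
  shows "diag_aff n {} (\<lambda>k. z * unitv j k) \<in> carrier (Kgroup n c)"
    and "commutes_with_conjugates (Kgroup n c) (diag_aff n {} (\<lambda>k. z * unitv j k))"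
proof -
  have "admissible n c {} (\<lambda>k. z * unitv j k)"
    using assms by (simp add: admissible_def cvec_sum_def unitv_def)
  then show "diag_aff n {} (\<lambda>k. z * unitv j k) \<in> carrier (Kgroup n c)"
    and "commutes_with_conjugates (Kgroup n c) (diag_aff n {} (\<lambda>k. z * unitv j k))"
    by (simp_all add: admissible_imp_mem commutes_with_conjugates_iff)
qed

lemma commutes_mod_squares_iff:
  assumes j: "j \<in> {1..n}"
  shows "commutes_mod_squares (Kgroup n c) (diag_aff n {} m) (diag_aff n {j} u) \<longleftrightarrow> m j / 2 \<in> \<int>"
proof
  assume "commutes_mod_squares (Kgroup n c) (diag_aff n {} m) (diag_aff n {j} u)"
  then obtain t where t: "commutes_with_conjugates (Kgroup n c) t"
    and comm: "(diag_aff n {} m \<otimes>\<^bsub>Kgroup n c\<^esub> t \<otimes>\<^bsub>Kgroup n c\<^esub> t) \<otimes>\<^bsub>Kgroup n c\<^esub> diag_aff n {j} u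
      = diag_aff n {j} u \<otimes>\<^bsub>Kgroup n c\<^esub> (diag_aff n {} m \<otimes>\<^bsub>Kgroup n c\<^esub> t \<otimes>\<^bsub>Kgroup n c\<^esub> t)"
    unfolding commutes_mod_squares_def by blast
  obtain p where p: "t = diag_aff n {} p" "\<forall>k\<in>{1..n}. p k \<in> \<int>"
    using t by (rule commutes_with_conjugates_imp_translation)
  have "m j + 2 * p j = 0"
    using comm unfolding p(1) square_translation_mult commutes_translation_iff[OF j] .
  then have "m j / 2 = - p j"
    by simp
  then show "m j / 2 \<in> \<int>"
    using p(2) j by simp
next
  assume "m j / 2 \<in> \<int>"
  then have "- (m j / 2) \<in> \<int>"
    by simp
  moreover have "(diag_aff n {} m \<otimes>\<^bsub>Kgroup n c\<^esub> diag_aff n {} (\<lambda>k. - (m j / 2) * unitv j k)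
      \<otimes>\<^bsub>Kgroup n c\<^esub> diag_aff n {} (\<lambda>k. - (m j / 2) * unitv j k)) \<otimes>\<^bsub>Kgroup n c\<^esub> diag_aff n {j} u
    = diag_aff n {j} u \<otimes>\<^bsub>Kgroup n c\<^esub> (diag_aff n {} m \<otimes>\<^bsub>Kgroup n c\<^esub> diag_aff n {} (\<lambda>k. - (m j / 2) * unitv j k)
      \<otimes>\<^bsub>Kgroup n c\<^esub> diag_aff n {} (\<lambda>k. - (m j / 2) * unitv j k))"
    unfolding square_translation_mult commutes_translation_iff[OF j] by (simp add: unitv_def)
  ultimately show "commutes_mod_squares (Kgroup n c) (diag_aff n {} m) (diag_aff n {j} u)"
    unfolding commutes_mod_squares_def using integer_unit_translation by blast
qed

lemma inverted_mod_squares_iff: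
  "inverted_mod_squares (Kgroup n c) (diag_aff n {} m) \<longleftrightarrow> m n / 2 \<in> \<int>"
proof
  assume "inverted_mod_squares (Kgroup n c) (diag_aff n {} m)"
  then obtain t e where t: "commutes_with_conjugates (Kgroup n c) t" and e: "e \<in> carrier (Kgroup n c)"
    and inverted: "inverts (Kgroup n c) e (diag_aff n {} m \<otimes>\<^bsub>Kgroup n c\<^esub> t \<otimes>\<^bsub>Kgroup n c\<^esub> t)"
    unfolding inverted_mod_squares_def by blast
  obtain p where p: "t = diag_aff n {} p" "\<forall>k\<in>{1..n}. p k \<in> \<int>"
    using t by (rule commutes_with_conjugates_imp_translation)
  obtain S v where e_eq: "e = diag_aff n S v" and "admissible n c S v"
    using e mem_imp_admissible by blast
  then have "n \<notin> S" "n \<in> {1..n}"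
    using two_le_n by (auto simp: admissible_def)
  then have "m n + 2 * p n = 0"
    using inverted unfolding e_eq p(1) square_translation_mult inverts_translation_iff by blast
  then have "m n / 2 = - p n"
    by simp
  then show "m n / 2 \<in> \<int>"
    using p(2) \<open>n \<in> {1..n}\<close> by simp
next
  assume "m n / 2 \<in> \<int>"
  then have half: "- (m n / 2) \<in> \<int>"
    by simp
  have "admissible n c {1..n-1} (cvec_sum c {1..n-1})"
    by (simp add: admissible_def)
  then have "diag_aff n {1..n-1} (cvec_sum c {1..n-1}) \<in> carrier (Kgroup n c)"
    by (rule admissible_imp_mem)
  moreover have "inverts (Kgroup n c) (diag_aff n {1..n-1} (cvec_sum c {1..n-1}))
      (diag_aff n {} m \<otimes>\<^bsub>Kgroup n c\<^esub> diag_aff n {} (\<lambda>k. - (m n / 2) * unitv n k)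
        \<otimes>\<^bsub>Kgroup n c\<^esub> diag_aff n {} (\<lambda>k. - (m n / 2) * unitv n k))"
    unfolding square_translation_mult inverts_translation_iff by (auto simp: unitv_def)
  ultimately show "inverted_mod_squares (Kgroup n c) (diag_aff n {} m)"
    unfolding inverted_mod_squares_def using integer_unit_translation[OF half] by blast
qed

lemma commutes_with_conjugates_mult_inv_iff:
  assumes S: "admissible n c S v" and T: "admissible n c T w"
  shows "commutes_with_conjugates (Kgroup n c)
      (diag_aff n S v \<otimes>\<^bsub>Kgroup n c\<^esub> inv\<^bsub>Kgroup n c\<^esub> diag_aff n T w) \<longleftrightarrow> S = T"
proof -
  have "diag_aff n S v \<otimes>\<^bsub>Kgroup n c\<^esub> inv\<^bsub>Kgroup n c\<^esub> diag_aff n T w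
      = diag_aff n (sym_diff S T) (\<lambda>k. sgn_on S k * (- sgn_on T k * w k) + v k)"
    by (simp add: inv_Kgroup_diag_aff[OF admissible_imp_mem[OF T]])
  moreover have "admissible n c (sym_diff S T) (\<lambda>k. sgn_on S k * (- sgn_on T k * w k) + v k)"
    using admissible_mult[OF valid S admissible_inv[OF valid T]] .
  ultimately show ?thesis
    using commutes_with_conjugates_iff by auto
qed

lemma half_square_in_Ints_iff:
  assumes adm: "admissible n c {p} u" and k: "k \<in> {1..n}"
  shows "(sgn_on {p} k * u k + u k) / 2 \<in> \<int> \<longleftrightarrow> cvec c p k = 0"
proof (cases "k = p")
  case False
  have p: "p \<in> {1..n-1}"
    using adm by (simp add: admissible_def)
  have diff: "u k - cvec c p k \<in> \<int>"
    using adm k by (simp add: admissible_def cvec_sum_def)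
  have "u k \<in> \<int> \<longleftrightarrow> cvec c p k \<in> \<int>"
  proof
    assume "u k \<in> \<int>"
    then show "cvec c p k \<in> \<int>"
      using Ints_diff[OF _ diff] by force
  next
    assume "cvec c p k \<in> \<int>"
    then show "u k \<in> \<int>"
      using Ints_add[OF diff] by force
  qed
  also have "\<dots> \<longleftrightarrow> cvec c p k = 0"
  proof
    assume "cvec c p k \<in> \<int>"
    then show "cvec c p k = 0"
      using cvec_in_halves[OF valid p, of k] half_notin_Ints by (metis insertE singletonD)
  qed simp
  finally show ?thesis
    using False by (simp add: sgn_on_def)
qed (simp add: sgn_on_def)

end

section \<open>Isomorphisms\<close>

locale Kgroup_iso = A: Kgroup_setting n c + B: Kgroup_setting n c' for n c c' +
  fixes \<phi>
  assumes iso: "\<phi> \<in> iso (Kgroup n c) (Kgroup n c')"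

sublocale Kgroup_iso \<subseteq> group_iso "Kgroup n c" "Kgroup n c'" \<phi>
  using iso A.group_Kgroup B.group_Kgroup by unfold_locales (simp_all add: iso_def)

context Kgroup_iso
begin

lemma generator_image:
  assumes i: "i \<in> {1..n-1}"
  obtains p u where "\<phi> (diag_aff n {i} (cvec c i)) = diag_aff n {p} u" "admissible n c' {p} u"
proof -
  have mem: "diag_aff n {i} (cvec c i) \<in> carrier (Kgroup n c)"
    using A.genC_mem[OF i] .
  have "admissible n c {i} (cvec c i)"
    using i by (simp add: admissible_def cvec_sum_def)
  then have minimal: "minimally_inverting (Kgroup n c') (\<phi> (diag_aff n {i} (cvec c i)))"
    using A.minimally_inverting_iff minimally_inverting_hom_iff[OF mem] by blast
  obtain S u where S: "\<phi> (diag_aff n {i} (cvec c i)) = diag_aff n S u" "admissible n c' S u"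
    using B.mem_imp_admissible hom_closed[OF mem] by blast
  then obtain p where "S = {p}"
    using minimal B.minimally_inverting_iff by auto
  then show ?thesis
    using that S by blast
qed

lemma generator_image_index_inj:
  assumes i: "i \<in> {1..n-1}" and j: "j \<in> {1..n-1}"
    and image_i: "\<phi> (diag_aff n {i} (cvec c i)) = diag_aff n {p} u" "admissible n c' {p} u"
    and image_j: "\<phi> (diag_aff n {j} (cvec c j)) = diag_aff n {p} u'" "admissible n c' {p} u'"
  shows "i = j"
proof -
  have mem: "diag_aff n {i} (cvec c i) \<in> carrier (Kgroup n c)" "diag_aff n {j} (cvec c j) \<in> carrier (Kgroup n c)"
    using A.genC_mem i j by blast+
  have adm: "admissible n c {i} (cvec c i)" "admissible n c {j} (cvec c j)"
    using i j by (simp_all add: admissible_def cvec_sum_def)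
  let ?x = "diag_aff n {i} (cvec c i) \<otimes>\<^bsub>Kgroup n c\<^esub> inv\<^bsub>Kgroup n c\<^esub> diag_aff n {j} (cvec c j)"
  have "commutes_with_conjugates (Kgroup n c') (\<phi> ?x)"
    using mem image_i image_j B.commutes_with_conjugates_mult_inv_iff[OF image_i(2) image_j(2)] by simp
  moreover have "?x \<in> carrier (Kgroup n c)"
    using mem by simp
  ultimately have "commutes_with_conjugates (Kgroup n c) ?x"
    using commutes_with_conjugates_hom_iff by blast
  then show ?thesis
    using A.commutes_with_conjugates_mult_inv_iff[OF adm] by simp
qed

lemma generator_image_cvec_zero_iff:
  assumes i: "i \<in> {1..n-1}" and k: "k \<in> {1..n-1}"
    and image_i: "\<phi> (diag_aff n {i} (cvec c i)) = diag_aff n {p} u" "admissible n c' {p} u"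
    and image_k: "\<phi> (diag_aff n {k} (cvec c k)) = diag_aff n {q} u'" "admissible n c' {q} u'"
  shows "cvec c i k = 0 \<longleftrightarrow> cvec c' p q = 0"
proof -
  let ?w = "diag_aff n {i} (cvec c i) \<otimes>\<^bsub>Kgroup n c\<^esub> diag_aff n {i} (cvec c i)"
  have mem: "diag_aff n {i} (cvec c i) \<in> carrier (Kgroup n c)" "diag_aff n {k} (cvec c k) \<in> carrier (Kgroup n c)"
    using A.genC_mem i k by blast+
  have adm: "admissible n c {i} (cvec c i)"
    using i by (simp add: admissible_def cvec_sum_def)
  have q: "q \<in> {1..n}"
    using admissible_subset[OF image_k(2)] by blast
  have k': "k \<in> {1..n}"
    using k by auto
  have "cvec c i k = 0 \<longleftrightarrow> commutes_mod_squares (Kgroup n c) ?w (diag_aff n {k} (cvec c k))"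
    using A.half_square_in_Ints_iff[OF adm k'] A.commutes_mod_squares_iff[OF k'] by simp
  also have "\<dots> \<longleftrightarrow> commutes_mod_squares (Kgroup n c') (\<phi> ?w) (\<phi> (diag_aff n {k} (cvec c k)))"
    using commutes_mod_squares_hom_iff[OF A.K.m_closed[OF mem(1) mem(1)] mem(2)] by (rule sym)
  also have "\<dots> \<longleftrightarrow> cvec c' p q = 0"
    unfolding hom_mult[OF mem(1) mem(1)] image_i(1) image_k(1)
    using B.commutes_mod_squares_iff[OF q] B.half_square_in_Ints_iff[OF image_i(2) q] by simp
  finally show ?thesis .
qed

lemma generator_image_cvec_zero_iff_last:
  assumes i: "i \<in> {1..n-1}"
    and image_i: "\<phi> (diag_aff n {i} (cvec c i)) = diag_aff n {p} u" "admissible n c' {p} u"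
  shows "cvec c i n = 0 \<longleftrightarrow> cvec c' p n = 0"
proof -
  let ?w = "diag_aff n {i} (cvec c i) \<otimes>\<^bsub>Kgroup n c\<^esub> diag_aff n {i} (cvec c i)"
  have mem: "diag_aff n {i} (cvec c i) \<in> carrier (Kgroup n c)"
    using A.genC_mem i by blast
  have adm: "admissible n c {i} (cvec c i)"
    using i by (simp add: admissible_def cvec_sum_def)
  have n: "n \<in> {1..n}"
    using A.two_le_n by simp
  have "cvec c i n = 0 \<longleftrightarrow> inverted_mod_squares (Kgroup n c) ?w"
    using A.half_square_in_Ints_iff[OF adm n] A.inverted_mod_squares_iff by simp
  also have "\<dots> \<longleftrightarrow> inverted_mod_squares (Kgroup n c') (\<phi> ?w)"
    using inverted_mod_squares_hom_iff[OF A.K.m_closed[OF mem mem]] by (rule sym)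
  also have "\<dots> \<longleftrightarrow> cvec c' p n = 0"
    unfolding hom_mult[OF mem mem] image_i(1)
    using B.inverted_mod_squares_iff B.half_square_in_Ints_iff[OF image_i(2) n] by simp
  finally show ?thesis .
qed

lemma generator_image_choice:
  obtains \<pi> U where "\<And>i. i \<in> {1..n-1} \<Longrightarrow> \<phi> (diag_aff n {i} (cvec c i)) = diag_aff n {\<pi> i} (U i)"
    and "\<And>i. i \<in> {1..n-1} \<Longrightarrow> admissible n c' {\<pi> i} (U i)"
proof -
  have "\<forall>i\<in>{1..n-1}. \<exists>p u. \<phi> (diag_aff n {i} (cvec c i)) = diag_aff n {p} u \<and> admissible n c' {p} u"
    by (metis generator_image)
  from bchoice[OF this] obtain \<pi> where "\<forall>i\<in>{1..n-1}. \<exists>u.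
      \<phi> (diag_aff n {i} (cvec c i)) = diag_aff n {\<pi> i} u \<and> admissible n c' {\<pi> i} u"
    by blast
  from bchoice[OF this] show ?thesis
    using that by blast
qed

lemma iso_imp_cvec_eq: "\<forall>i\<in>{1..n-1}. cvec c i = cvec c' i"
proof -
  obtain \<pi> U where image: "\<phi> (diag_aff n {i} (cvec c i)) = diag_aff n {\<pi> i} (U i)"
    "admissible n c' {\<pi> i} (U i)" if "i \<in> {1..n-1}" for i
    using generator_image_choice by metis
  have \<pi>_range: "\<pi> i \<in> {1..n-1}" if "i \<in> {1..n-1}" for i
    using image(2)[OF that] by (simp add: admissible_def)
  have \<pi>_inj: "i = j" if "i \<in> {1..n-1}" "j \<in> {1..n-1}" "\<pi> i = \<pi> j" for i j
    using generator_image_index_inj image that by metis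
  define f where "f k = (if k = n then n else \<pi> k)" for k
  have f_cols: "f i = \<pi> i" if "i \<in> {1..n-1}" for i
    using that by (auto simp: f_def)
  have "inj_on \<pi> {1..n-1}"
    using \<pi>_inj by (auto intro: inj_onI)
  then have f_bij: "bij_betw f {1..n} {1..n}"
    unfolding f_def using A.two_le_n \<pi>_range by (intro bij_betw_fix_last) auto
  have half: "cvec c i k = 1/2 \<longleftrightarrow> cvec c' (f i) (f k) = 1/2" if i: "i \<in> {1..n-1}" and k: "k \<in> {1..n}" for i k
  proof -
    have "cvec c i k = 0 \<longleftrightarrow> cvec c' (\<pi> i) (f k) = 0"
    proof (cases "k = n")
      case True
      then show ?thesis
        using generator_image_cvec_zero_iff_last[OF i] image[OF i] by (simp add: f_def)
    next
      case False
      then have "k \<in> {1..n-1}"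
        using k by auto
      then show ?thesis
        using generator_image_cvec_zero_iff[OF i] image[OF i] image f_cols by metis
    qed
    moreover have "cvec c i k \<in> {0, 1/2}" "cvec c' (\<pi> i) (f k) \<in> {0, 1/2}"
      using cvec_in_halves A.valid B.valid i \<pi>_range[OF i] by blast+
    ultimately show ?thesis
      using f_cols[OF i] by auto
  qed
  have "f n = n"
    by (simp add: f_def)
  then show ?thesis
    using cvec_eq_if_half_pattern_relabelled[OF A.valid B.valid f_bij] half by blast
qed

end

lemma Kgroup_iso_iff_cvec_eq:
  assumes "n \<ge> 2" "valid_params n c" "valid_params n c'"
  shows "Kgroup n c \<cong> Kgroup n c' \<longleftrightarrow> (\<forall>i\<in>{1..n-1}. cvec c i = cvec c' i)"
proof
  assume "Kgroup n c \<cong> Kgroup n c'"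
  then obtain \<phi> where "\<phi> \<in> iso (Kgroup n c) (Kgroup n c')"
    unfolding is_iso_def by blast
  then interpret Kgroup_iso n c c' \<phi>
    using assms by unfold_locales
  show "\<forall>i\<in>{1..n-1}. cvec c i = cvec c' i"
    by (rule iso_imp_cvec_eq)
next
  assume "\<forall>i\<in>{1..n-1}. cvec c i = cvec c' i"
  then have "Kgroup n c = Kgroup n c'"
    by (rule Kgroup_eq_if_cvec_eq)
  then show "Kgroup n c \<cong> Kgroup n c'"
    by simp
qed

theorem proposition4p4:
  fixes n :: nat and c c' :: "nat \<Rightarrow> nat \<Rightarrow> real"
  assumes "n \<ge> 2" and "valid_params n c" and "valid_params n c'"
  shows "(Kgroup n c \<cong> Kgroup n c' \<longleftrightarrow> arr n c = arr n c')
       \<and> (arr n c = arr n c' \<longleftrightarrow> digraph_iso {1..n} (arcs n c) {1..n} (arcs n c'))"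
  using Kgroup_iso_iff_cvec_eq[OF assms] arr_eq_iff_cvec_eq arr_eq_iff_digraph_iso[OF assms] by blast

end
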